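(* Fix $L>0$. For parameters $a,b$ call a barrier a pair $(\phi,\psi)$ solving $$-\phi''=\phi(1-\phi-a\psi),\quad -\psi''=\psi(1-b\phi-\psi)\ \text{ in }(0,L),\qquad \phi(0)=\phi(L)=0,\ \psi(0)=\psi(L)=1,$$ with $0<\phi(x)<1$ and $0<\psi(x)<1$ for all $x\in(0,L)$. Let $(a_n,b_n)_{n\in\mathbb{N}}$ be a sequence with $a_n>0$ and $b_n>\max\{a_n,1\}$ for all $n$, such that a barrier exists for the parameters $a_n,b_n$ for every $n$. Suppose $(a_n,b_n)\to(a,b)$ where $a>0$, $b>\max\{a,1\}$ and $a>1$. Then a barrier exists for the parameters $a,b$. *)

theory Defs
  imports "HOL-Analysis.Analysis"
begin

definition barrier :: "real \<Rightarrow> real \<Rightarrow> real \<Rightarrow> (real \<Rightarrow> real) \<Rightarrow> (real \<Rightarrow> real) \<Rightarrow> bool" where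
  "barrier L a b \<phi> \<psi> \<longleftrightarrow>
     continuous_on {0..L} \<phi> \<and> continuous_on {0..L} \<psi> \<and>
     (\<exists>\<phi>' \<phi>'' \<psi>' \<psi>''. \<forall>x\<in>{0<..<L}.
        (\<phi> has_real_derivative \<phi>' x) (at x) \<and> (\<phi>' has_real_derivative \<phi>'' x) (at x) \<and>
        (\<psi> has_real_derivative \<psi>' x) (at x) \<and> (\<psi>' has_real_derivative \<psi>'' x) (at x) \<and>
        - \<phi>'' x = \<phi> x * (1 - \<phi> x - a * \<psi> x) \<and>
        - \<psi>'' x = \<psi> x * (1 - b * \<phi> x - \<psi> x)) \<and>
     \<phi> 0 = 0 \<and> \<phi> L = 0 \<and> \<psi> 0 = 1 \<and> \<psi> L = 1 \<and>
     (\<forall>x\<in>{0<..<L}. 0 < \<phi> x \<and> \<phi> x < 1 \<and> 0 < \<psi> x \<and> \<psi> x < 1)"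

end

theory Submission
  imports Defs "HOL-Complex_Analysis.Great_Picard"
begin

text \<open>
  The second derivatives of a barrier for parameters (a, b) are bounded by 1 + |a| and 1 + |b|,
  so by Rolle's theorem barriers are Lipschitz with a constant depending only on the parameters.
  By Arzela-Ascoli a subsequence of the given barriers converges uniformly; their second
  derivatives then converge uniformly as well, so the limit (phi, psi) solves the system with
  0 <= phi, psi <= 1. At an interior maximum of phi_n one has a_n psi_n <= 1, hence
  psi <= 1/a < 1 somewhere in the limit. The strict bounds follow from the strong maximum
  principle: a nonnegative solution of |u''| <= K u vanishing at an interior point vanishes
  identically (Gronwall applied to u^2 + u'^2). This excludes psi = 0 (as psi(0) = 1) and phi = 0
  (then psi would solve -psi'' = psi (1 - psi), which has no interior minimum below 1), while
  phi < 1 and psi < 1 because a, b > 0.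
\<close>

section \<open>Second derivatives on an interval\<close>

definition has_deriv2_on :: "(real \<Rightarrow> real) \<Rightarrow> (real \<Rightarrow> real) \<Rightarrow> real set \<Rightarrow> bool" where
  "has_deriv2_on f f'' S \<longleftrightarrow>
     (\<exists>f'. \<forall>x\<in>S. (f has_real_derivative f' x) (at x) \<and> (f' has_real_derivative f'' x) (at x))"

lemma has_deriv2_onE:
  assumes "has_deriv2_on f f'' S"
  obtains f' where "\<And>x. x \<in> S \<Longrightarrow> (f has_real_derivative f' x) (at x)"
    and "\<And>x. x \<in> S \<Longrightarrow> (f' has_real_derivative f'' x) (at x)"
  using assms unfolding has_deriv2_on_def by blast

lemma has_deriv2_on_max_nonpos:
  assumes D2: "has_deriv2_on f f'' {c<..<d}" and x: "x \<in> {c<..<d}"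
    and max: "\<And>y. y \<in> {c<..<d} \<Longrightarrow> f y \<le> f x"
  shows "f'' x \<le> 0"
proof (rule ccontr)
  assume "\<not> f'' x \<le> 0"
  obtain f' where D: "\<And>y. y \<in> {c<..<d} \<Longrightarrow> (f has_real_derivative f' y) (at y)"
    and D': "\<And>y. y \<in> {c<..<d} \<Longrightarrow> (f' has_real_derivative f'' y) (at y)"
    using D2 has_deriv2_onE by blast
  have "f' x = 0"
    by (rule DERIV_local_max[OF D[OF x], of "min (x - c) (d - x)"])
      (use x max in \<open>auto simp: abs_if\<close>)
  obtain e where "e > 0" and inc: "\<And>h. 0 < h \<Longrightarrow> h < e \<Longrightarrow> f' x < f' (x + h)"
    using DERIV_pos_inc_right[OF D'[OF x]] \<open>\<not> f'' x \<le> 0\<close> by auto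
  define y where "y = x + min e (d - x) / 2"
  have y: "x < y" "y < d" "y - x < e"
    using \<open>e > 0\<close> x by (auto simp: y_def min_def field_simps)
  obtain z where z: "x < z" "z < y" "f y - f x = (y - x) * f' z"
    using MVT2[OF \<open>x < y\<close>, of f f'] D x y by force
  have "f' z > 0"
    using inc[of "z - x"] z y \<open>f' x = 0\<close> by simp
  then have "(y - x) * f' z > 0"
    using y by simp
  then have "f y > f x"
    using z(3) by linarith
  then show False
    using max[of y] x y by simp
qed

lemma has_deriv2_on_min_nonneg:
  assumes "has_deriv2_on f f'' {c<..<d}" and "x \<in> {c<..<d}"
    and "\<And>y. y \<in> {c<..<d} \<Longrightarrow> f x \<le> f y"
  shows "f'' x \<ge> 0"
proof -
  obtain f' where "\<And>y. y \<in> {c<..<d} \<Longrightarrow> (f has_real_derivative f' y) (at y)"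
    and "\<And>y. y \<in> {c<..<d} \<Longrightarrow> (f' has_real_derivative f'' y) (at y)"
    using assms(1) has_deriv2_onE by blast
  then have "has_deriv2_on (\<lambda>y. - f y) (\<lambda>y. - f'' y) {c<..<d}"
    unfolding has_deriv2_on_def by (auto intro!: exI[of _ "\<lambda>y. - f' y"] derivative_intros)
  from has_deriv2_on_max_nonpos[OF this] assms(2,3) show ?thesis
    by force
qed

lemma gronwall_vanishes:
  fixes E E' :: "real \<Rightarrow> real"
  assumes D: "\<And>t. t \<in> {c<..<d} \<Longrightarrow> (E has_real_derivative E' t) (at t)"
    and bound: "\<And>t. t \<in> {c<..<d} \<Longrightarrow> \<bar>E' t\<bar> \<le> C * E t"
    and y: "y \<in> {c<..<d}" "E y = 0" and x: "x \<in> {c<..<d}"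
  shows "E x = 0"
proof -
  have decreasing: "E t * exp (- C * t) \<le> E s * exp (- C * s)"
    if "s \<in> {c<..<d}" "t \<in> {c<..<d}" "s \<le> t" for s t
  proof (rule DERIV_nonpos_imp_nonincreasing[OF \<open>s \<le> t\<close>])
    fix u assume "s \<le> u" "u \<le> t"
    then have u: "u \<in> {c<..<d}"
      using that by auto
    have "((\<lambda>u. E u * exp (- C * u)) has_real_derivative (E' u - C * E u) * exp (- C * u)) (at u)"
      using D[OF u] by (auto intro!: derivative_eq_intros simp: algebra_simps)
    moreover have "(E' u - C * E u) * exp (- C * u) \<le> 0"
      using bound[OF u] by (simp add: mult_nonpos_nonneg)
    ultimately show "\<exists>l. ((\<lambda>u. E u * exp (- C * u)) has_real_derivative l) (at u) \<and> l \<le> 0"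
      by blast
  qed
  have increasing: "E s * exp (C * s) \<le> E t * exp (C * t)"
    if "s \<in> {c<..<d}" "t \<in> {c<..<d}" "s \<le> t" for s t
  proof (rule DERIV_nonneg_imp_nondecreasing[OF \<open>s \<le> t\<close>])
    fix u assume "s \<le> u" "u \<le> t"
    then have u: "u \<in> {c<..<d}"
      using that by auto
    have "((\<lambda>u. E u * exp (C * u)) has_real_derivative (E' u + C * E u) * exp (C * u)) (at u)"
      using D[OF u] by (auto intro!: derivative_eq_intros simp: algebra_simps)
    moreover have "0 \<le> (E' u + C * E u) * exp (C * u)"
      using bound[OF u] by simp
    ultimately show "\<exists>l. ((\<lambda>u. E u * exp (C * u)) has_real_derivative l) (at u) \<and> 0 \<le> l"
      by blast
  qed
  consider "y \<le> x" | "x \<le> y"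
    by linarith
  then show ?thesis
  proof cases
    case 1
    have "E x * exp (- C * x) \<le> 0" "0 \<le> E x * exp (C * x)"
      using decreasing[OF y(1) x 1] increasing[OF y(1) x 1] y(2) by simp_all
    then show ?thesis
      by (simp add: mult_le_0_iff zero_le_mult_iff)
  next
    case 2
    have "E x * exp (C * x) \<le> 0" "0 \<le> E x * exp (- C * x)"
      using increasing[OF x y(1) 2] decreasing[OF x y(1) 2] y(2) by simp_all
    then show ?thesis
      by (simp add: mult_le_0_iff zero_le_mult_iff)
  qed
qed

lemma has_deriv2_on_nonneg_vanishes:
  assumes D2: "has_deriv2_on f f'' {c<..<d}" and "0 \<le> K"
    and nonneg: "\<And>x. x \<in> {c<..<d} \<Longrightarrow> 0 \<le> f x"
    and bound: "\<And>x. x \<in> {c<..<d} \<Longrightarrow> \<bar>f'' x\<bar> \<le> K * f x"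
    and y: "y \<in> {c<..<d}" "f y = 0" and x: "x \<in> {c<..<d}"
  shows "f x = 0"
proof -
  obtain f' where D: "\<And>x. x \<in> {c<..<d} \<Longrightarrow> (f has_real_derivative f' x) (at x)"
    and D': "\<And>x. x \<in> {c<..<d} \<Longrightarrow> (f' has_real_derivative f'' x) (at x)"
    using D2 has_deriv2_onE by blast
  have "f' y = 0"
    by (rule DERIV_local_min[OF D[OF y(1)], of "min (y - c) (d - y)"])
      (use y nonneg in \<open>auto simp: abs_if\<close>)
  define E where "E t = (f t)\<^sup>2 + (f' t)\<^sup>2" for t
  have "E x = 0"
  proof (rule gronwall_vanishes[where E = E and x = x])
    fix t assume t: "t \<in> {c<..<d}"
    show "(E has_real_derivative 2 * f t * f' t + 2 * f' t * f'' t) (at t)"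
      unfolding E_def using D[OF t] D'[OF t] by (auto intro!: derivative_eq_intros)
    have sq: "\<bar>2 * f t * f' t\<bar> \<le> E t"
      using sum_squares_bound[of "f t" "f' t"] sum_squares_bound[of "f t" "- f' t"]
      by (simp add: E_def abs_if)
    have "\<bar>2 * f' t * f'' t\<bar> \<le> 2 * \<bar>f' t\<bar> * (K * f t)"
      using bound[OF t] by (simp add: abs_mult mult_left_mono)
    also have "\<dots> = K * \<bar>2 * f t * f' t\<bar>"
      using nonneg[OF t] by (simp add: abs_mult)
    also have "\<dots> \<le> K * E t"
      using sq \<open>0 \<le> K\<close> by (rule mult_left_mono)
    finally show "\<bar>2 * f t * f' t + 2 * f' t * f'' t\<bar> \<le> (1 + K) * E t"
      using sq by (simp add: algebra_simps)
  qed (use y x \<open>f' y = 0\<close> in \<open>auto simp: E_def\<close>)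
  then show ?thesis
    by (simp add: E_def add_nonneg_eq_0_iff)
qed

lemma lipschitz_on_of_has_deriv2_on:
  assumes "c < d" and cont: "continuous_on {c..d} f" and ends: "f c = f d"
    and D2: "has_deriv2_on f f'' {c<..<d}" and bound: "\<And>x. x \<in> {c<..<d} \<Longrightarrow> \<bar>f'' x\<bar> \<le> C"
  shows "(C * (d - c))-lipschitz_on {c..d} f"
proof -
  obtain f' where D: "\<And>x. x \<in> {c<..<d} \<Longrightarrow> (f has_real_derivative f' x) (at x)"
    and D': "\<And>x. x \<in> {c<..<d} \<Longrightarrow> (f' has_real_derivative f'' x) (at x)"
    using D2 has_deriv2_onE by blast
  have "C \<ge> 0"
    using bound[of "(c + d) / 2"] \<open>c < d\<close> by auto
  obtain z where z: "z \<in> {c<..<d}" "(f has_real_derivative 0) (at z)"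
    using Rolle[OF \<open>c < d\<close> ends cont] D by (force simp: real_differentiable_def)
  have "f' z = 0"
    using DERIV_unique[OF D[OF z(1)] z(2)] .
  have f'_bound: "\<bar>f' x\<bar> \<le> C * (d - c)" if x: "x \<in> {c<..<d}" for x
  proof -
    have "\<bar>f' x - f' z\<bar> \<le> C * \<bar>x - z\<bar>"
      using field_differentiable_bound[of "{c<..<d}" f' f'' C x z] D' bound x z(1)
      by (auto simp: at_within_open[of _ "{c<..<d}"])
    also have "\<dots> \<le> C * (d - c)"
      using x z(1) \<open>C \<ge> 0\<close> by (intro mult_left_mono) auto
    finally show ?thesis
      using \<open>f' z = 0\<close> by simp
  qed
  have "(C * (d - c))-lipschitz_on {c<..<d} f"
  proof (rule lipschitz_onI)
    show "dist (f x) (f y) \<le> C * (d - c) * dist x y" if "x \<in> {c<..<d}" "y \<in> {c<..<d}" for x y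
      using field_differentiable_bound[of "{c<..<d}" f f' "C * (d - c)" x y] D f'_bound that
      by (auto simp: at_within_open[of _ "{c<..<d}"] dist_real_def)
    show "0 \<le> C * (d - c)"
      using \<open>C \<ge> 0\<close> \<open>c < d\<close> by simp
  qed
  then show ?thesis
    using lipschitz_on_closure[of _ "{c<..<d}" f] cont \<open>c < d\<close> by simp
qed

section \<open>Limits of sequences of functions\<close>

lemma uniform_limit_imp_deriv_approx:
  fixes f' :: "nat \<Rightarrow> 'a \<Rightarrow> real"
  assumes "uniform_limit S f' g' sequentially" and "0 < e"
  shows "\<forall>\<^sub>F n in sequentially. \<forall>x\<in>S. \<forall>h. norm (f' n x * h - g' x * h) \<le> e * norm h"
  using uniform_limitD[OF assms]
proof eventually_elim
  case (elim n)
  show ?case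
  proof (intro ballI allI)
    fix x h assume "x \<in> S"
    then have "\<bar>f' n x - g' x\<bar> * \<bar>h\<bar> \<le> e * \<bar>h\<bar>"
      using elim by (intro mult_right_mono) (auto simp: dist_real_def)
    then show "norm (f' n x * h - g' x * h) \<le> e * norm h"
      by (simp add: abs_mult flip: left_diff_distrib)
  qed
qed

lemma uniform_limit_deriv_sequence:
  fixes f f' :: "nat \<Rightarrow> real \<Rightarrow> real"
  assumes S: "convex S" "bounded S" and x0: "x0 \<in> S"
    and D: "\<And>n x. x \<in> S \<Longrightarrow> (f n has_real_derivative f' n x) (at x within S)"
    and U: "uniform_limit S f' g' sequentially"
    and lim: "(\<lambda>n. f n x0) \<longlonglongrightarrow> l"
  shows "\<exists>g. uniform_limit S f g sequentially \<and>
    (\<forall>x\<in>S. (g has_real_derivative g' x) (at x within S))"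
proof -
  have D': "(f n has_derivative (*) (f' n x)) (at x within S)" if "x \<in> S" for n x
    using D[OF that] by (simp add: has_field_derivative_def)
  note approx = uniform_limit_imp_deriv_approx[OF U]
  obtain g where g: "\<And>x. x \<in> S \<Longrightarrow> (\<lambda>n. f n x) \<longlonglongrightarrow> g x"
    and g': "\<And>x. x \<in> S \<Longrightarrow> (g has_derivative (*) (g' x)) (at x within S)"
    using has_derivative_sequence[OF S(1) D' approx x0 lim] by metis
  obtain B where "B > 0" and B: "\<And>x. x \<in> S \<Longrightarrow> norm x \<le> B"
    using S(2) by (auto simp: bounded_pos)
  have "uniformly_Cauchy_on S f"
    unfolding uniformly_Cauchy_on_def
  proof (intro allI impI)
    fix e :: real assume "e > 0"
    then obtain N1 where N1: "\<forall>m\<ge>N1. \<forall>n\<ge>N1. \<forall>x\<in>S. \<forall>y\<in>S.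
        norm ((f m x - f n x) - (f m y - f n y)) \<le> e / (4 * B) * norm (x - y)"
      using has_derivative_sequence_Lipschitz[OF S(1) D' approx, of "e / (4 * B)"] \<open>B > 0\<close>
      by auto
    obtain N2 where N2: "\<forall>m\<ge>N2. \<forall>n\<ge>N2. dist (f m x0) (f n x0) < e / 2"
      using LIMSEQ_imp_Cauchy[OF lim] \<open>e > 0\<close> unfolding Cauchy_def by (meson half_gt_zero)
    show "\<exists>M. \<forall>x\<in>S. \<forall>m\<ge>M. \<forall>n\<ge>M. dist (f m x) (f n x) < e"
    proof (intro exI ballI allI impI)
      fix x m n assume x: "x \<in> S" and m: "max N1 N2 \<le> m" and n: "max N1 N2 \<le> n"
      have "norm (x - x0) \<le> 2 * B"
        using B[OF x] B[OF x0] norm_triangle_ineq4[of x x0] by linarith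
      then have "e / (4 * B) * norm (x - x0) \<le> e / 2"
        using \<open>e > 0\<close> \<open>B > 0\<close> by (simp add: field_simps)
      then have "\<bar>(f m x - f n x) - (f m x0 - f n x0)\<bar> \<le> e / 2"
        using N1[rule_format, of m n x x0] m n x x0 by simp
      moreover have "\<bar>f m x0 - f n x0\<bar> < e / 2"
        using N2 m n by (simp add: dist_real_def)
      ultimately show "dist (f m x) (f n x) < e"
        unfolding dist_real_def by linarith
    qed
  qed
  then obtain h where h: "uniform_limit S f h sequentially"
    using Cauchy_uniformly_convergent unfolding uniformly_convergent_on_def by blast
  have "h x = g x" if "x \<in> S" for x
    using LIMSEQ_unique[OF tendsto_uniform_limitI[OF h that] g[OF that]] .
  with h have "uniform_limit S f g sequentially"
    using uniform_limit_cong'[of S f f h g] by blast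
  then show ?thesis
    using g' by (auto simp: has_field_derivative_def)
qed

text \<open>
  The uniform convergence of the second derivatives makes f'_m - f'_n nearly constant, and by the
  mean value theorem on [x0, y0] its value at some point is controlled by the values of f_m - f_n.
\<close>
lemma convergent_deriv_sequence:
  fixes f f' f'' :: "nat \<Rightarrow> real \<Rightarrow> real"
  assumes D: "\<And>n x. x \<in> {c<..<d} \<Longrightarrow> (f n has_real_derivative f' n x) (at x)"
    and D': "\<And>n x. x \<in> {c<..<d} \<Longrightarrow> (f' n has_real_derivative f'' n x) (at x)"
    and U: "uniform_limit {c<..<d} f'' G sequentially"
    and conv: "\<And>x. x \<in> {c<..<d} \<Longrightarrow> convergent (\<lambda>n. f n x)"
    and x0: "x0 \<in> {c<..<d}"
  shows "convergent (\<lambda>n. f' n x0)"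
  unfolding Cauchy_convergent_iff[symmetric] Cauchy_def
proof (intro allI impI)
  fix e :: real assume "e > 0"
  define y0 where "y0 = (x0 + d) / 2"
  define \<delta> where "\<delta> = y0 - x0"
  have y0: "y0 \<in> {c<..<d}" "x0 < y0" and "\<delta> > 0"
    using x0 by (auto simp: y0_def \<delta>_def)
  have D'': "(f' n has_derivative (*) (f'' n x)) (at x within {c<..<d})" if "x \<in> {c<..<d}" for n x
    using D'[OF that] by (simp add: has_field_derivative_def has_derivative_at_withinI)
  obtain N1 where N1: "\<forall>m\<ge>N1. \<forall>n\<ge>N1. \<forall>x\<in>{c<..<d}. \<forall>y\<in>{c<..<d}.
      norm ((f' m x - f' n x) - (f' m y - f' n y)) \<le> e / (2 * \<delta>) * norm (x - y)"
    using has_derivative_sequence_Lipschitz[OF _ D'' uniform_limit_imp_deriv_approx[OF U],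
        of "e / (2 * \<delta>)"] \<open>e > 0\<close> \<open>\<delta> > 0\<close>
    by auto
  have "\<exists>N. \<forall>m\<ge>N. \<forall>n\<ge>N. \<bar>f m x - f n x\<bar> < e * \<delta> / 4" if "x \<in> {c<..<d}" for x
  proof -
    have "e * \<delta> / 4 > 0"
      using \<open>e > 0\<close> \<open>\<delta> > 0\<close> by simp
    then show ?thesis
      using conv[OF that] unfolding Cauchy_convergent_iff[symmetric] Cauchy_def dist_real_def
      by blast
  qed
  then obtain N2 N3 where N2: "\<forall>m\<ge>N2. \<forall>n\<ge>N2. \<bar>f m y0 - f n y0\<bar> < e * \<delta> / 4"
    and N3: "\<forall>m\<ge>N3. \<forall>n\<ge>N3. \<bar>f m x0 - f n x0\<bar> < e * \<delta> / 4"
    using x0 y0(1) by metis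
  show "\<exists>M. \<forall>m\<ge>M. \<forall>n\<ge>M. dist (f' m x0) (f' n x0) < e"
  proof (intro exI allI impI)
    fix m n assume m: "max (max N1 N2) N3 \<le> m" and n: "max (max N1 N2) N3 \<le> n"
    have deriv: "((\<lambda>t. f m t - f n t) has_real_derivative f' m t - f' n t) (at t)"
      if "x0 \<le> t" "t \<le> y0" for t
      using that x0 y0 by (intro DERIV_diff D) auto
    obtain \<xi> where \<xi>: "x0 < \<xi>" "\<xi> < y0"
      and mvt: "(f m y0 - f n y0) - (f m x0 - f n x0) = \<delta> * (f' m \<xi> - f' n \<xi>)"
      using MVT2[OF y0(2) deriv] unfolding \<delta>_def by blast
    have "\<bar>f m y0 - f n y0\<bar> < e * \<delta> / 4" "\<bar>f m x0 - f n x0\<bar> < e * \<delta> / 4"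
      using N2 N3 m n by simp_all
    then have "\<bar>(f m y0 - f n y0) - (f m x0 - f n x0)\<bar> < e * \<delta> / 2"
      by linarith
    then have "\<delta> * \<bar>f' m \<xi> - f' n \<xi>\<bar> < \<delta> * (e / 2)"
      using \<open>\<delta> > 0\<close> unfolding mvt by (simp add: abs_mult)
    then have "\<bar>f' m \<xi> - f' n \<xi>\<bar> < e / 2"
      using \<open>\<delta> > 0\<close> by simp
    moreover have "\<bar>(f' m x0 - f' n x0) - (f' m \<xi> - f' n \<xi>)\<bar> \<le> e / 2"
    proof -
      have "\<bar>(f' m x0 - f' n x0) - (f' m \<xi> - f' n \<xi>)\<bar> \<le> e / (2 * \<delta>) * \<bar>x0 - \<xi>\<bar>"
        using N1[rule_format, of m n x0 \<xi>] m n x0 \<xi> y0 by simp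
      also have "\<dots> \<le> e / (2 * \<delta>) * \<delta>"
        using \<xi> \<open>e > 0\<close> by (intro mult_left_mono) (auto simp: \<delta>_def)
      finally show ?thesis
        using \<open>\<delta> > 0\<close> by simp
    qed
    ultimately show "dist (f' m x0) (f' n x0) < e"
      unfolding dist_real_def by linarith
  qed
qed

lemma has_deriv2_on_uniform_limit:
  assumes D2: "\<And>n. has_deriv2_on (f n) (f'' n) {c<..<d}"
    and U: "uniform_limit {c<..<d} f'' G sequentially"
    and lim: "\<And>x. x \<in> {c<..<d} \<Longrightarrow> (\<lambda>n. f n x) \<longlonglongrightarrow> F x"
  shows "has_deriv2_on F G {c<..<d}"
proof (cases "c < d")
  case False
  then show ?thesis
    by (simp add: has_deriv2_on_def)
next
  case True
  define x0 where "x0 = (c + d) / 2"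
  have x0: "x0 \<in> {c<..<d}"
    using True by (simp add: x0_def)
  have "\<forall>n. \<exists>f'. \<forall>x\<in>{c<..<d}.
      (f n has_real_derivative f' x) (at x) \<and> (f' has_real_derivative f'' n x) (at x)"
    using D2 by (simp add: has_deriv2_on_def)
  then obtain f' where "\<forall>n. \<forall>x\<in>{c<..<d}.
      (f n has_real_derivative f' n x) (at x) \<and> (f' n has_real_derivative f'' n x) (at x)"
    by (metis choice)
  then have D: "\<And>n x. x \<in> {c<..<d} \<Longrightarrow> (f n has_real_derivative f' n x) (at x)"
    and D': "\<And>n x. x \<in> {c<..<d} \<Longrightarrow> (f' n has_real_derivative f'' n x) (at x)"
    by blast+
  have S: "convex {c<..<d}" "bounded {c<..<d}"
    by simp_all
  have "convergent (\<lambda>n. f n x)" if "x \<in> {c<..<d}" for x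
    using lim[OF that] unfolding convergent_def by blast
  from convergent_deriv_sequence[OF D D' U this x0]
  obtain p where p: "(\<lambda>n. f' n x0) \<longlonglongrightarrow> p"
    unfolding convergent_def by blast
  obtain g1 where U1: "uniform_limit {c<..<d} f' g1 sequentially"
    and g1: "\<And>x. x \<in> {c<..<d} \<Longrightarrow> (g1 has_real_derivative G x) (at x within {c<..<d})"
    using uniform_limit_deriv_sequence[OF S x0 has_field_derivative_at_within[OF D'] U p]
    by blast
  obtain g0 where g0: "\<And>x. x \<in> {c<..<d} \<Longrightarrow> (g0 has_real_derivative g1 x) (at x within {c<..<d})"
    and U0: "uniform_limit {c<..<d} f g0 sequentially"
    using uniform_limit_deriv_sequence[OF S x0 has_field_derivative_at_within[OF D] U1 lim[OF x0]]
    by blast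
  have "g0 x = F x" if "x \<in> {c<..<d}" for x
    using LIMSEQ_unique[OF tendsto_uniform_limitI[OF U0 that] lim[OF that]] .
  moreover have "(g0 has_real_derivative g1 x) (at x)" if "x \<in> {c<..<d}" for x
    using g0[OF that] unfolding at_within_open[OF that open_greaterThanLessThan] .
  ultimately have "(F has_real_derivative g1 x) (at x)" if "x \<in> {c<..<d}" for x
    using has_field_derivative_transform_within_open[OF _ open_greaterThanLessThan that] that
    by blast
  moreover have "(g1 has_real_derivative G x) (at x)" if "x \<in> {c<..<d}" for x
    using g1[OF that] unfolding at_within_open[OF that open_greaterThanLessThan] .
  ultimately show ?thesis
    unfolding has_deriv2_on_def by blast
qed

lemma lipschitz_sequence_uniform_subseq:
  fixes f :: "nat \<Rightarrow> 'a::euclidean_space \<Rightarrow> 'b::{real_normed_vector,heine_borel}"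
  assumes "compact S" and "\<And>n x. x \<in> S \<Longrightarrow> norm (f n x) \<le> M"
    and lip: "\<And>n. C-lipschitz_on S (f n)"
  obtains r g where "strict_mono r" "continuous_on S g"
    "uniform_limit S (\<lambda>n. f (r n)) g sequentially"
proof (rule Arzela_Ascoli[OF assms(1,2)])
  fix x and e :: real assume "x \<in> S" "0 < e"
  have "0 \<le> C"
    using lipschitz_on_nonneg[OF lip] .
  show "\<exists>d>0. \<forall>n y. y \<in> S \<and> norm (x - y) < d \<longrightarrow> norm (f n x - f n y) < e"
  proof (intro exI conjI allI impI)
    show "0 < e / (C + 1)"
      using \<open>0 < e\<close> \<open>0 \<le> C\<close> by simp
    fix n y assume y: "y \<in> S \<and> norm (x - y) < e / (C + 1)"
    have "norm (f n x - f n y) \<le> C * norm (x - y)"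
      using lipschitz_onD[OF lip \<open>x \<in> S\<close>, of y n] y by (simp add: dist_norm)
    also have "\<dots> \<le> (C + 1) * norm (x - y)"
      by (simp add: algebra_simps)
    also have "\<dots> < e"
      using y \<open>0 \<le> C\<close> by (simp add: field_simps)
    finally show "norm (f n x - f n y) < e" .
  qed
next
  fix g k
  assume g: "continuous_on S g" and k: "strict_mono (k :: nat \<Rightarrow> nat)"
    and U: "\<And>e. 0 < e \<Longrightarrow> \<exists>N. \<forall>n x. n \<ge> N \<and> x \<in> S \<longrightarrow> norm (f (k n) x - g x) < e"
  have "uniform_limit S (\<lambda>n. f (k n)) g sequentially"
    unfolding uniform_limit_sequentially_iff dist_norm
  proof (intro allI impI)
    fix e :: real assume "e > 0"
    then obtain N where "\<forall>n x. N \<le> n \<and> x \<in> S \<longrightarrow> norm (f (k n) x - g x) < e"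
      using U by blast
    then show "\<exists>N. \<forall>n\<ge>N. \<forall>x\<in>S. norm (f (k n) x - g x) < e"
      by blast
  qed
  with k g show thesis
    by (rule that)
qed

lemma uniform_limit_exists_le:
  fixes g :: "nat \<Rightarrow> 'a::metric_space \<Rightarrow> real"
  assumes U: "uniform_limit S g G sequentially" and "compact S" and "continuous_on S G"
    and below: "\<And>n. \<exists>x\<in>S. g n x \<le> c n" and c: "c \<longlonglongrightarrow> c0"
  shows "\<exists>x\<in>S. G x \<le> c0"
proof -
  have "S \<noteq> {}"
    using below[of 0] by blast
  then obtain m where m: "m \<in> S" "\<And>x. x \<in> S \<Longrightarrow> G m \<le> G x"
    using continuous_attains_inf[OF assms(2) _ assms(3)] by blast
  have "G m \<le> c0"
  proof (rule field_le_epsilon)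
    fix e :: real assume "e > 0"
    have "\<forall>\<^sub>F n in sequentially. (\<forall>x\<in>S. dist (g n x) (G x) < e / 2) \<and> dist (c n) c0 < e / 2"
      using uniform_limitD[OF U half_gt_zero] tendstoD[OF c half_gt_zero] \<open>e > 0\<close>
      by (intro eventually_conj) auto
    then obtain n where n: "\<forall>x\<in>S. dist (g n x) (G x) < e / 2" "dist (c n) c0 < e / 2"
      using eventually_happens' sequentially_bot by blast
    obtain x where "x \<in> S" "g n x \<le> c n"
      using below by blast
    moreover have "\<bar>g n x - G x\<bar> < e / 2" "\<bar>c n - c0\<bar> < e / 2"
      using n \<open>x \<in> S\<close> by (simp_all add: dist_real_def)
    ultimately show "G m \<le> c0 + e"
      using m(2)[of x] by linarith
  qed
  then show ?thesis
    using m(1) by blast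
qed

section \<open>Barriers\<close>

text \<open>In this notation the equations of a barrier read
  -phi'' = lv_reaction a phi psi and -psi'' = lv_reaction b psi phi.\<close>
definition lv_reaction :: "real \<Rightarrow> real \<Rightarrow> real \<Rightarrow> real" where
  "lv_reaction c u v = u * (1 - u - c * v)"

lemma abs_lv_reaction_le:
  assumes "0 \<le> u" "u \<le> 1" "0 \<le> v" "v \<le> 1"
  shows "\<bar>lv_reaction c u v\<bar> \<le> (1 + \<bar>c\<bar>) * u"
proof -
  have "\<bar>c * v\<bar> \<le> \<bar>c\<bar>"
    using assms by (simp add: abs_mult mult_left_le)
  then have "\<bar>1 - u - c * v\<bar> \<le> 1 + \<bar>c\<bar>"
    using assms by linarith
  then have "u * \<bar>1 - u - c * v\<bar> \<le> u * (1 + \<bar>c\<bar>)"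
    using assms by (simp add: mult_left_mono)
  then show ?thesis
    using assms by (simp add: lv_reaction_def abs_mult mult.commute)
qed

lemma uniform_limit_lv_reaction:
  fixes u v :: "nat \<Rightarrow> 'a \<Rightarrow> real"
  assumes U: "uniform_limit S u u0 sequentially" and V: "uniform_limit S v v0 sequentially"
    and c: "c \<longlonglongrightarrow> c0"
    and u0: "\<And>x. x \<in> S \<Longrightarrow> \<bar>u0 x\<bar> \<le> 1" and v0: "\<And>x. x \<in> S \<Longrightarrow> \<bar>v0 x\<bar> \<le> 1"
  shows "uniform_limit S (\<lambda>n x. lv_reaction (c n) (u n x) (v n x))
    (\<lambda>x. lv_reaction c0 (u0 x) (v0 x)) sequentially"
proof -
  have C: "uniform_limit S (\<lambda>n x. c n) (\<lambda>x. c0) sequentially"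
    using tendstoD[OF c] by (intro uniform_limitI) (auto elim: eventually_mono)
  have "bounded (u0 ` S)" "bounded (v0 ` S)"
    using u0 v0 by (auto simp: bounded_iff intro!: exI[of _ 1])
  moreover have "bounded ((\<lambda>x. c0) ` S)"
    by (auto simp: bounded_iff intro!: exI[of _ "\<bar>c0\<bar>"])
  moreover have "bounded ((\<lambda>x. 1 - u0 x - c0 * v0 x) ` S)"
  proof -
    have "\<bar>1 - u0 x - c0 * v0 x\<bar> \<le> 2 + \<bar>c0\<bar>" if "x \<in> S" for x
    proof -
      have "\<bar>c0 * v0 x\<bar> \<le> \<bar>c0\<bar>"
        using v0[OF that] by (simp add: abs_mult mult_left_le)
      then show ?thesis
        using u0[OF that] by linarith
    qed
    then show ?thesis
      by (auto simp: bounded_iff)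
  qed
  ultimately show ?thesis
    unfolding lv_reaction_def
    by (intro uniform_lim_mult uniform_limit_minus uniform_limit_const U V C)
qed

text \<open>The barrier conditions with the strict bounds relaxed, the form in which they survive
  uniform limits.\<close>
definition weak_barrier :: "real \<Rightarrow> real \<Rightarrow> real \<Rightarrow> (real \<Rightarrow> real) \<Rightarrow> (real \<Rightarrow> real) \<Rightarrow> bool" where
  "weak_barrier L a b \<phi> \<psi> \<longleftrightarrow>
     continuous_on {0..L} \<phi> \<and> continuous_on {0..L} \<psi> \<and>
     has_deriv2_on \<phi> (\<lambda>x. - lv_reaction a (\<phi> x) (\<psi> x)) {0<..<L} \<and>
     has_deriv2_on \<psi> (\<lambda>x. - lv_reaction b (\<psi> x) (\<phi> x)) {0<..<L} \<and>
     \<phi> 0 = 0 \<and> \<phi> L = 0 \<and> \<psi> 0 = 1 \<and> \<psi> L = 1 \<and>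
     (\<forall>x\<in>{0..L}. 0 \<le> \<phi> x \<and> \<phi> x \<le> 1 \<and> 0 \<le> \<psi> x \<and> \<psi> x \<le> 1)"

lemma barrier_iff_weak_barrier:
  "barrier L a b \<phi> \<psi> \<longleftrightarrow>
     weak_barrier L a b \<phi> \<psi> \<and> (\<forall>x\<in>{0<..<L}. 0 < \<phi> x \<and> \<phi> x < 1 \<and> 0 < \<psi> x \<and> \<psi> x < 1)"
proof -
  have eqn: "(\<exists>\<phi>' \<phi>'' \<psi>' \<psi>''. \<forall>x\<in>{0<..<L}.
        (\<phi> has_real_derivative \<phi>' x) (at x) \<and> (\<phi>' has_real_derivative \<phi>'' x) (at x) \<and>
        (\<psi> has_real_derivative \<psi>' x) (at x) \<and> (\<psi>' has_real_derivative \<psi>'' x) (at x) \<and>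
        - \<phi>'' x = \<phi> x * (1 - \<phi> x - a * \<psi> x) \<and>
        - \<psi>'' x = \<psi> x * (1 - b * \<phi> x - \<psi> x)) \<longleftrightarrow>
      has_deriv2_on \<phi> (\<lambda>x. - lv_reaction a (\<phi> x) (\<psi> x)) {0<..<L} \<and>
      has_deriv2_on \<psi> (\<lambda>x. - lv_reaction b (\<psi> x) (\<phi> x)) {0<..<L}"
    (is "?lhs \<longleftrightarrow> ?rhs")
  proof
    assume ?lhs
    then obtain \<phi>' \<phi>'' \<psi>' \<psi>'' where "\<forall>x\<in>{0<..<L}.
        (\<phi> has_real_derivative \<phi>' x) (at x) \<and> (\<phi>' has_real_derivative \<phi>'' x) (at x) \<and>
        (\<psi> has_real_derivative \<psi>' x) (at x) \<and> (\<psi>' has_real_derivative \<psi>'' x) (at x) \<and>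
        - \<phi>'' x = \<phi> x * (1 - \<phi> x - a * \<psi> x) \<and>
        - \<psi>'' x = \<psi> x * (1 - b * \<phi> x - \<psi> x)"
      by blast
    then show ?rhs
      unfolding has_deriv2_on_def lv_reaction_def
      by (intro conjI exI[of _ \<phi>'] exI[of _ \<psi>']) (auto simp: algebra_simps)
  next
    assume ?rhs
    then obtain \<phi>' \<psi>' where "\<forall>x\<in>{0<..<L}.
        (\<phi> has_real_derivative \<phi>' x) (at x) \<and>
        (\<phi>' has_real_derivative - lv_reaction a (\<phi> x) (\<psi> x)) (at x) \<and>
        (\<psi> has_real_derivative \<psi>' x) (at x) \<and>
        (\<psi>' has_real_derivative - lv_reaction b (\<psi> x) (\<phi> x)) (at x)"
      unfolding has_deriv2_on_def by blast
    then show ?lhs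
      unfolding lv_reaction_def
      by (intro exI[of _ \<phi>'] exI[of _ \<psi>'] exI[of _ "\<lambda>x. - lv_reaction a (\<phi> x) (\<psi> x)"]
          exI[of _ "\<lambda>x. - lv_reaction b (\<psi> x) (\<phi> x)"])
        (auto simp: lv_reaction_def algebra_simps)
  qed
  have closed: "\<forall>x\<in>{0..L}. 0 \<le> \<phi> x \<and> \<phi> x \<le> 1 \<and> 0 \<le> \<psi> x \<and> \<psi> x \<le> 1"
    if "\<phi> 0 = 0" "\<phi> L = 0" "\<psi> 0 = 1" "\<psi> L = 1"
      and "\<forall>x\<in>{0<..<L}. 0 < \<phi> x \<and> \<phi> x < 1 \<and> 0 < \<psi> x \<and> \<psi> x < 1"
  proof
    fix x assume "x \<in> {0..L}"
    then consider "x = 0" | "x = L" | "x \<in> {0<..<L}"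
      by fastforce
    then show "0 \<le> \<phi> x \<and> \<phi> x \<le> 1 \<and> 0 \<le> \<psi> x \<and> \<psi> x \<le> 1"
      by cases (use that(1-4) that(5)[rule_format, of x] in auto)
  qed
  show ?thesis
    unfolding barrier_def weak_barrier_def eqn using closed by blast
qed

lemma weak_barrierD:
  assumes "weak_barrier L a b \<phi> \<psi>"
  shows "continuous_on {0..L} \<phi>" "continuous_on {0..L} \<psi>"
    and "has_deriv2_on \<phi> (\<lambda>x. - lv_reaction a (\<phi> x) (\<psi> x)) {0<..<L}"
    and "has_deriv2_on \<psi> (\<lambda>x. - lv_reaction b (\<psi> x) (\<phi> x)) {0<..<L}"
    and "\<phi> 0 = 0" "\<phi> L = 0" "\<psi> 0 = 1" "\<psi> L = 1"
    and "\<And>x. x \<in> {0..L} \<Longrightarrow> 0 \<le> \<phi> x" "\<And>x. x \<in> {0..L} \<Longrightarrow> \<phi> x \<le> 1"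
    and "\<And>x. x \<in> {0..L} \<Longrightarrow> 0 \<le> \<psi> x" "\<And>x. x \<in> {0..L} \<Longrightarrow> \<psi> x \<le> 1"
  using assms by (simp_all add: weak_barrier_def)

lemma barrier_exists_psi_le:
  assumes "0 < L" and "barrier L a b \<phi> \<psi>"
  shows "\<exists>x\<in>{0<..<L}. a * \<psi> x \<le> 1"
proof -
  have wb: "weak_barrier L a b \<phi> \<psi>" and pos: "\<And>x. x \<in> {0<..<L} \<Longrightarrow> 0 < \<phi> x"
    using assms(2) by (simp_all add: barrier_iff_weak_barrier)
  obtain x where x: "x \<in> {0..L}" and max: "\<And>y. y \<in> {0..L} \<Longrightarrow> \<phi> y \<le> \<phi> x"
    using continuous_attains_sup[OF compact_Icc _ weak_barrierD(1)[OF wb]] \<open>0 < L\<close> by auto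
  have "0 < \<phi> x"
    using pos[of "L / 2"] max[of "L / 2"] \<open>0 < L\<close> by simp
  then have x_in: "x \<in> {0<..<L}"
    using x weak_barrierD(5,6)[OF wb] by (auto simp: less_le)
  have "- lv_reaction a (\<phi> x) (\<psi> x) \<le> 0"
    by (rule has_deriv2_on_max_nonpos[OF weak_barrierD(3)[OF wb] x_in]) (use max in auto)
  then have "a * \<psi> x \<le> 1 - \<phi> x"
    using \<open>0 < \<phi> x\<close> by (simp add: lv_reaction_def zero_le_mult_iff)
  then show ?thesis
    using x_in \<open>0 < \<phi> x\<close> by force
qed

lemma weak_barrier_lipschitz:
  assumes "0 < L" and wb: "weak_barrier L a b \<phi> \<psi>"
  shows "((1 + \<bar>a\<bar>) * L)-lipschitz_on {0..L} \<phi>" and "((1 + \<bar>b\<bar>) * L)-lipschitz_on {0..L} \<psi>"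
proof -
  note bounds = weak_barrierD(9-12)[OF wb]
  have "\<bar>- lv_reaction a (\<phi> x) (\<psi> x)\<bar> \<le> 1 + \<bar>a\<bar>" if "x \<in> {0<..<L}" for x
    using abs_lv_reaction_le[of "\<phi> x" "\<psi> x" a] bounds[of x] mult_left_le[of "\<phi> x" "1 + \<bar>a\<bar>"] that
    by simp
  then show "((1 + \<bar>a\<bar>) * L)-lipschitz_on {0..L} \<phi>"
    using lipschitz_on_of_has_deriv2_on[OF \<open>0 < L\<close> weak_barrierD(1)[OF wb] _ weak_barrierD(3)[OF wb]]
      weak_barrierD(5,6)[OF wb]
    by simp
  have "\<bar>- lv_reaction b (\<psi> x) (\<phi> x)\<bar> \<le> 1 + \<bar>b\<bar>" if "x \<in> {0<..<L}" for x
    using abs_lv_reaction_le[of "\<psi> x" "\<phi> x" b] bounds[of x] mult_left_le[of "\<psi> x" "1 + \<bar>b\<bar>"] that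
    by simp
  then show "((1 + \<bar>b\<bar>) * L)-lipschitz_on {0..L} \<psi>"
    using lipschitz_on_of_has_deriv2_on[OF \<open>0 < L\<close> weak_barrierD(2)[OF wb] _ weak_barrierD(4)[OF wb]]
      weak_barrierD(7,8)[OF wb]
    by simp
qed

lemma weak_barrier_uniform_limit:
  assumes "0 < L" and wb: "\<And>n. weak_barrier L (an n) (bn n) (\<Phi> n) (\<Psi> n)"
    and an: "an \<longlonglongrightarrow> a" and bn: "bn \<longlonglongrightarrow> b"
    and U\<Phi>: "uniform_limit {0..L} \<Phi> \<phi> sequentially"
    and U\<Psi>: "uniform_limit {0..L} \<Psi> \<psi> sequentially"
  shows "weak_barrier L a b \<phi> \<psi>"
proof -
  have lim\<Phi>: "(\<lambda>n. \<Phi> n x) \<longlonglongrightarrow> \<phi> x" and lim\<Psi>: "(\<lambda>n. \<Psi> n x) \<longlonglongrightarrow> \<psi> x"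
    if "x \<in> {0..L}" for x
    using tendsto_uniform_limitI[OF U\<Phi> that] tendsto_uniform_limitI[OF U\<Psi> that] by simp_all
  have bounds: "0 \<le> \<phi> x \<and> \<phi> x \<le> 1 \<and> 0 \<le> \<psi> x \<and> \<psi> x \<le> 1" if x: "x \<in> {0..L}" for x
    using LIMSEQ_le_const[OF lim\<Phi>[OF x]] LIMSEQ_le_const2[OF lim\<Phi>[OF x]]
      LIMSEQ_le_const[OF lim\<Psi>[OF x]] LIMSEQ_le_const2[OF lim\<Psi>[OF x]]
      weak_barrierD(9-12)[OF wb x]
    by meson
  have ends: "0 \<in> {0..L}" "L \<in> {0..L}"
    using \<open>0 < L\<close> by simp_all
  have boundary: "\<phi> 0 = 0" "\<phi> L = 0" "\<psi> 0 = 1" "\<psi> L = 1"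
    using LIMSEQ_unique[OF lim\<Phi>[OF ends(1)]] LIMSEQ_unique[OF lim\<Phi>[OF ends(2)]]
      LIMSEQ_unique[OF lim\<Psi>[OF ends(1)]] LIMSEQ_unique[OF lim\<Psi>[OF ends(2)]]
      weak_barrierD(5-8)[OF wb]
    by simp_all
  have cont: "continuous_on {0..L} \<phi>" "continuous_on {0..L} \<psi>"
    using uniform_limit_theorem[OF _ U\<Phi>] uniform_limit_theorem[OF _ U\<Psi>] weak_barrierD(1,2)[OF wb]
    by simp_all
  have sub: "{0<..<L} \<subseteq> {0..L}"
    by auto
  note U = uniform_limit_on_subset[OF U\<Phi> sub] uniform_limit_on_subset[OF U\<Psi> sub]
  have unit: "\<bar>\<phi> x\<bar> \<le> 1" "\<bar>\<psi> x\<bar> \<le> 1" if "x \<in> {0<..<L}" for x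
    using bounds[of x] that by auto
  have "has_deriv2_on \<phi> (\<lambda>x. - lv_reaction a (\<phi> x) (\<psi> x)) {0<..<L}"
    by (rule has_deriv2_on_uniform_limit[OF weak_barrierD(3)[OF wb]
          uniform_limit_uminus[OF uniform_limit_lv_reaction[OF U an unit]]])
      (use lim\<Phi> in auto)
  moreover have "has_deriv2_on \<psi> (\<lambda>x. - lv_reaction b (\<psi> x) (\<phi> x)) {0<..<L}"
    by (rule has_deriv2_on_uniform_limit[OF weak_barrierD(4)[OF wb]
          uniform_limit_uminus[OF uniform_limit_lv_reaction[OF U(2,1) bn unit(2,1)]]])
      (use lim\<Psi> in auto)
  ultimately show ?thesis
    using cont boundary bounds by (simp add: weak_barrier_def)
qed

lemma weak_barrier_sequence_subseq:
  assumes "0 < L" and wb: "\<And>n. weak_barrier L (an n) (bn n) (\<Phi> n) (\<Psi> n)"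
    and an: "an \<longlonglongrightarrow> a" and bn: "bn \<longlonglongrightarrow> b"
  obtains r \<phi> \<psi> where "strict_mono r" "weak_barrier L a b \<phi> \<psi>"
    "uniform_limit {0..L} (\<lambda>n. \<Phi> (r n)) \<phi> sequentially"
    "uniform_limit {0..L} (\<lambda>n. \<Psi> (r n)) \<psi> sequentially"
proof -
  obtain A where A: "\<And>n. \<bar>an n\<bar> \<le> A"
    using BseqE[OF convergent_imp_Bseq[OF convergentI[OF an]]] by (metis real_norm_def)
  obtain B where B: "\<And>n. \<bar>bn n\<bar> \<le> B"
    using BseqE[OF convergent_imp_Bseq[OF convergentI[OF bn]]] by (metis real_norm_def)
  define C where "C = sqrt (((1 + A) * L)\<^sup>2 + ((1 + B) * L)\<^sup>2)"
  have lip: "C-lipschitz_on {0..L} (\<lambda>x. (\<Phi> n x, \<Psi> n x))" for n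
    unfolding C_def
  proof (rule lipschitz_on_Pair)
    show "((1 + A) * L)-lipschitz_on {0..L} (\<Phi> n)"
      by (rule lipschitz_on_mono[OF weak_barrier_lipschitz(1)[OF \<open>0 < L\<close> wb[of n]]])
        (use A[of n] \<open>0 < L\<close> in auto)
    show "((1 + B) * L)-lipschitz_on {0..L} (\<Psi> n)"
      by (rule lipschitz_on_mono[OF weak_barrier_lipschitz(2)[OF \<open>0 < L\<close> wb[of n]]])
        (use B[of n] \<open>0 < L\<close> in auto)
  qed
  have bound: "norm (\<Phi> n x, \<Psi> n x) \<le> 2" if "x \<in> {0..L}" for n x
    using norm_Pair_le[of "\<Phi> n x" "\<Psi> n x"] weak_barrierD(9-12)[OF wb that, of n]
    by simp
  show thesis
  proof (rule lipschitz_sequence_uniform_subseq[OF compact_Icc bound lip])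
    fix r g
    assume r: "strict_mono r"
      and U: "uniform_limit {0..L} (\<lambda>n x. (\<Phi> (r n) x, \<Psi> (r n) x)) g sequentially"
    have U\<Phi>: "uniform_limit {0..L} (\<lambda>n. \<Phi> (r n)) (\<lambda>x. fst (g x)) sequentially"
      using bounded_linear.uniform_limit[OF bounded_linear_fst U] by simp
    have U\<Psi>: "uniform_limit {0..L} (\<lambda>n. \<Psi> (r n)) (\<lambda>x. snd (g x)) sequentially"
      using bounded_linear.uniform_limit[OF bounded_linear_snd U] by simp
    have wb_lim: "weak_barrier L a b (\<lambda>x. fst (g x)) (\<lambda>x. snd (g x))"
      by (rule weak_barrier_uniform_limit[OF \<open>0 < L\<close> wb _ _ U\<Phi> U\<Psi>])
        (use LIMSEQ_subseq_LIMSEQ[OF an r] LIMSEQ_subseq_LIMSEQ[OF bn r] in \<open>simp_all add: o_def\<close>)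
    from r wb_lim U\<Phi> U\<Psi> show thesis
      by (rule that)
  qed
qed

lemma lv_component_lt_one:
  assumes D2: "has_deriv2_on u (\<lambda>x. - lv_reaction c (u x) (v x)) {0<..<L}"
    and le1: "\<And>x. x \<in> {0<..<L} \<Longrightarrow> u x \<le> 1" and "0 < c"
    and y: "y \<in> {0<..<L}" and "0 < v y"
  shows "u y < 1"
proof (rule ccontr)
  assume "\<not> u y < 1"
  then have "u y = 1"
    using le1[OF y] by simp
  then have "- lv_reaction c (u y) (v y) \<le> 0"
    using has_deriv2_on_max_nonpos[OF D2 y] le1 by simp
  moreover have "- lv_reaction c (u y) (v y) = c * v y"
    using \<open>u y = 1\<close> by (simp add: lv_reaction_def)
  ultimately show False
    using mult_pos_pos[OF \<open>0 < c\<close> \<open>0 < v y\<close>] by linarith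
qed

lemma weak_barrier_imp_barrier:
  assumes "0 < L" and wb: "weak_barrier L a b \<phi> \<psi>" and "0 < a" "0 < b"
    and x1: "x1 \<in> {0..L}" "\<psi> x1 < 1"
  shows "barrier L a b \<phi> \<psi>"
proof -
  note D2\<phi> = weak_barrierD(3)[OF wb] and D2\<psi> = weak_barrierD(4)[OF wb]
  have bounds: "0 \<le> \<phi> x \<and> \<phi> x \<le> 1 \<and> 0 \<le> \<psi> x \<and> \<psi> x \<le> 1" if "x \<in> {0<..<L}" for x
    using weak_barrierD(9-12)[OF wb, of x] that by simp
  have vanishes: "u x = 0"
    if D2: "has_deriv2_on u (\<lambda>x. - lv_reaction c (u x) (v x)) {0<..<L}"
      and uv: "\<And>x. x \<in> {0<..<L} \<Longrightarrow> 0 \<le> u x \<and> u x \<le> 1 \<and> 0 \<le> v x \<and> v x \<le> 1"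
      and "y \<in> {0<..<L}" "u y = 0" "x \<in> {0<..<L}" for u v c y x
    by (rule has_deriv2_on_nonneg_vanishes[OF D2, of "1 + \<bar>c\<bar>"])
      (use that abs_lv_reaction_le uv in auto)
  have \<psi>_pos: "0 < \<psi> y" if y: "y \<in> {0<..<L}" for y
  proof (rule ccontr)
    assume "\<not> 0 < \<psi> y"
    then have "\<psi> y = 0"
      using bounds[OF y] by simp
    then have "\<psi> x = 0" if "x \<in> {0<..<L}" for x
      using vanishes[OF D2\<psi> _ y _ that] bounds by blast
    then have "\<psi> 0 = 0"
      using continuous_constant_on_closure[of "{0<..<L}" \<psi> 0 0] weak_barrierD(2)[OF wb] \<open>0 < L\<close>
      by simp
    then show False
      using weak_barrierD(7)[OF wb] by simp
  qed
  have \<phi>_pos: "0 < \<phi> y" if y: "y \<in> {0<..<L}" for y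
  proof (rule ccontr)
    assume "\<not> 0 < \<phi> y"
    then have "\<phi> y = 0"
      using bounds[OF y] by simp
    then have \<phi>_zero: "\<phi> x = 0" if "x \<in> {0<..<L}" for x
      using vanishes[OF D2\<phi> _ y _ that] bounds by blast
    txt \<open>Then psi solves -psi'' = psi (1 - psi) and cannot have an interior minimum below 1.\<close>
    obtain m where m: "m \<in> {0..L}" and min: "\<And>x. x \<in> {0..L} \<Longrightarrow> \<psi> m \<le> \<psi> x"
      using continuous_attains_inf[OF compact_Icc _ weak_barrierD(2)[OF wb]] \<open>0 < L\<close> by auto
    have "\<psi> m < 1"
      using min[OF x1(1)] x1(2) by simp
    then have m_in: "m \<in> {0<..<L}"
      using m weak_barrierD(7,8)[OF wb] by (auto simp: less_le)
    have "0 \<le> - lv_reaction b (\<psi> m) (\<phi> m)"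
      by (rule has_deriv2_on_min_nonneg[OF D2\<psi> m_in]) (use min in auto)
    moreover have "0 < \<psi> m * (1 - \<psi> m)"
      using \<psi>_pos[OF m_in] \<open>\<psi> m < 1\<close> by simp
    ultimately show False
      using \<phi>_zero[OF m_in] by (simp add: lv_reaction_def)
  qed
  have "\<phi> y < 1" "\<psi> y < 1" if "y \<in> {0<..<L}" for y
    using lv_component_lt_one[OF D2\<phi> _ \<open>0 < a\<close> that \<psi>_pos[OF that]]
      lv_component_lt_one[OF D2\<psi> _ \<open>0 < b\<close> that \<phi>_pos[OF that]] bounds
    by auto
  then show ?thesis
    using wb \<phi>_pos \<psi>_pos by (simp add: barrier_iff_weak_barrier)
qed

theorem proposition2:
  fixes L a b :: real and an bn :: "nat \<Rightarrow> real"
  assumes "L > 0"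
    and "\<And>n. an n > 0" and "\<And>n. bn n > max (an n) 1"
    and "\<And>n. \<exists>\<phi> \<psi>. barrier L (an n) (bn n) \<phi> \<psi>"
    and "an \<longlonglongrightarrow> a" and "bn \<longlonglongrightarrow> b"
    and "a > 0" and "b > max a 1" and "a > 1"
  shows "\<exists>\<phi> \<psi>. barrier L a b \<phi> \<psi>"
proof -
  obtain \<Phi> \<Psi> where bar: "\<And>n. barrier L (an n) (bn n) (\<Phi> n) (\<Psi> n)"
    using assms(4) by metis
  then have "\<And>n. weak_barrier L (an n) (bn n) (\<Phi> n) (\<Psi> n)"
    by (simp add: barrier_iff_weak_barrier)
  then obtain r \<phi> \<psi> where r: "strict_mono r" and wb: "weak_barrier L a b \<phi> \<psi>"
    and U: "uniform_limit {0..L} (\<lambda>n. \<Psi> (r n)) \<psi> sequentially"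
    using weak_barrier_sequence_subseq[OF \<open>L > 0\<close> _ assms(5,6)] by metis
  have below: "\<exists>x\<in>{0..L}. \<Psi> (r n) x \<le> 1 / an (r n)" for n
    using barrier_exists_psi_le[OF \<open>L > 0\<close> bar] assms(2)[of "r n"]
    by (force simp: field_simps)
  moreover have "(\<lambda>n. 1 / an (r n)) \<longlonglongrightarrow> 1 / a"
    using LIMSEQ_subseq_LIMSEQ[OF assms(5) r] \<open>a > 0\<close> by (auto intro!: tendsto_divide simp: o_def)
  ultimately obtain x where "x \<in> {0..L}" "\<psi> x \<le> 1 / a"
    using uniform_limit_exists_le[OF U compact_Icc weak_barrierD(2)[OF wb] below] by blast
  moreover have "1 / a < 1"
    using \<open>a > 1\<close> by simp
  ultimately show ?thesis
    using weak_barrier_imp_barrier[OF \<open>L > 0\<close> wb \<open>a > 0\<close>] \<open>b > max a 1\<close> by force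
qed

end
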